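(* For all sufficiently large $n$, for every $k\ge t$ with $d_{\max}+1<n-k\le n/e^2$, we have $a_{k_1,\dots,k_x}<n^{-(2+x)}$ for every tuple $(k_1,\dots,k_x)$ of integers with $t_i\le k_i\le a_i$ and $\sum_i k_i=k$, and $\alpha_k\le\frac{1}{n^2}$.
   Context: Random graph model: $V$ is a set of $n$ vertices, $B\subseteq V$ a target set with $|B|=t$, each $v\in V$ has a prescribed out-degree $d_v$ with $2\le d_{\min}\le d_v\le d_{\max}$ (constants independent of $n$), and for each $v$ independently its out-neighbour set is chosen uniformly among all $d_v$-element subsets of $V$. Let $d_1,\dots,d_x$ be the distinct out-degrees, $a_i$ the number of vertices of out-degree $d_i$, $t_i$ the number of vertices of $B$ of out-degree $d_i$. For $S\supseteq B$ containing $k_i$ vertices of out-degree $d_i$, $R(k_1,\dots,k_x)$ is the probability that every vertex of $S$ has a directed path to $B$ lying inside $S$. For $k=\sum_i k_i$ with $t_i\le k_i\le a_i$, $a_{k_1,\dots,k_x}=\left(\prod_{i=1}^x\binom{a_i-t_i}{k_i-t_i}\left(\binom{n-k}{d_i}/\binom{n}{d_i}\right)^{a_i-k_i}\right)R(k_1,\dots,k_x)$, with the factor $(\binom{n-k}{d_i}/\binom{n}{d_i})^{a_i-k_i}$ equal to $1$ when $a_i=k_i$, and $\alpha_k=\sum_{\sum_i k_i=k,\ t_i\le k_i\le a_i}a_{k_1,\dots,k_x}$ (which is the probability that the set of vertices having a directed path to $B$ has exactly $k$ elements). *)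

theory Defs
  imports Complex_Main "HOL-Library.FuncSet"
begin

text \<open>Outcome space of the random digraph: each v in V picks an out-neighbour
  set, a d v element subset of V; uniform product measure = uniform on this finite set.\<close>
definition outcomes :: "'a set \<Rightarrow> ('a \<Rightarrow> nat) \<Rightarrow> ('a \<Rightarrow> 'a set) set" where
  "outcomes V d = PiE V (\<lambda>v. {A. A \<subseteq> V \<and> card A = d v})"

definition edges_in :: "('a \<Rightarrow> 'a set) \<Rightarrow> 'a set \<Rightarrow> ('a \<times> 'a) set" where
  "edges_in Nb S = {(u, w). u \<in> S \<and> w \<in> S \<and> w \<in> Nb u}"

definition all_reach :: "('a \<Rightarrow> 'a set) \<Rightarrow> 'a set \<Rightarrow> 'a set \<Rightarrow> bool" where
  "all_reach Nb B S \<longleftrightarrow> (\<forall>v\<in>S. \<exists>b\<in>B. (v, b) \<in> (edges_in Nb S)\<^sup>*)"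

definition R_set :: "'a set \<Rightarrow> ('a \<Rightarrow> nat) \<Rightarrow> 'a set \<Rightarrow> 'a set \<Rightarrow> real" where
  "R_set V d B S = real (card {Nb \<in> outcomes V d. all_reach Nb B S}) / real (card (outcomes V d))"

definition cnt :: "('a \<Rightarrow> nat) \<Rightarrow> 'a set \<Rightarrow> nat \<Rightarrow> nat" where
  "cnt d X j = card {v \<in> X. d v = j}"

text \<open>R(k_1,...,k_x): tuples are indexed by the distinct degrees j in d ` V;
  kk j is the number of vertices of out-degree j in S.  R is evaluated at a set
  S with B \<subseteq> S \<subseteq> V having these counts (well defined by symmetry).\<close>
definition R_tuple :: "'a set \<Rightarrow> ('a \<Rightarrow> nat) \<Rightarrow> 'a set \<Rightarrow> (nat \<Rightarrow> nat) \<Rightarrow> real" where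
  "R_tuple V d B kk = R_set V d B
     (SOME S. B \<subseteq> S \<and> S \<subseteq> V \<and> (\<forall>j\<in>d ` V. cnt d S j = kk j))"

definition a_tuple :: "'a set \<Rightarrow> ('a \<Rightarrow> nat) \<Rightarrow> 'a set \<Rightarrow> (nat \<Rightarrow> nat) \<Rightarrow> real" where
  "a_tuple V d B kk =
     (let n = card V; k = (\<Sum>j\<in>d ` V. kk j) in
      (\<Prod>j\<in>d ` V. real ((cnt d V j - cnt d B j) choose (kk j - cnt d B j))
          * (real ((n - k) choose j) / real (n choose j)) ^ (cnt d V j - kk j))
      * R_tuple V d B kk)"

text \<open>Admissible tuples: t_j \<le> kk j \<le> a_j for each degree j and total k.\<close>
definition tuples :: "'a set \<Rightarrow> ('a \<Rightarrow> nat) \<Rightarrow> 'a set \<Rightarrow> nat \<Rightarrow> (nat \<Rightarrow> nat) set" where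
  "tuples V d B k = {kk \<in> PiE (d ` V) (\<lambda>j. {cnt d B j..cnt d V j}). (\<Sum>j\<in>d ` V. kk j) = k}"

definition alpha :: "'a set \<Rightarrow> ('a \<Rightarrow> nat) \<Rightarrow> 'a set \<Rightarrow> nat \<Rightarrow> real" where
  "alpha V d B k = (\<Sum>kk\<in>tuples V d B k. a_tuple V d B kk)"

end

theory Submission
  imports Defs
begin

text \<open>The reachability probability R is only used through R \<le> 1. Write m = n - k. For each
  degree j the binomial factor is at most a_j choose (a_j - k_j), and since j \<ge> 2 the ratio
  (m choose j) / (n choose j) is at most (m/n)^2; by Vandermonde the product of the binomials is at
  most n choose m, so a_{k_1,...,k_x} \<le> (n choose m) (m/n)^{2m} \<le> m^{2m} / (m! n^m).
  This bound decreases in m as long as e^2 m \<le> n, and the degrees lie in {2..d_max} with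
  d_max + 1 < m, whence m \<ge> x + 3 and a_{k_1,...,k_x} = O(n^{-(x+3)}). There are at most
  (n+1)^x admissible tuples, so \<alpha>_k = O(n^{-3}).\<close>

lemma choose_mult_le_choose_add: "(a choose b) * (c choose e) \<le> (a + c) choose (b + e)"
proof -
  have "(a choose b) * (c choose (b + e - b)) \<le> (\<Sum>i\<le>b + e. (a choose i) * (c choose (b + e - i)))"
    by (rule member_le_sum) auto
  also have "\<dots> = (a + c) choose (b + e)" by (rule vandermonde)
  finally show ?thesis by simp
qed

lemma prod_choose_le_choose_sum:
  assumes "finite D"
  shows "(\<Prod>j\<in>D. f j choose g j) \<le> (\<Sum>j\<in>D. f j) choose (\<Sum>j\<in>D. g j)"
  using assms
proof (induction D rule: finite_induct)
  case (insert a D)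
  have "(\<Prod>j\<in>insert a D. f j choose g j) \<le> (f a choose g a) * ((\<Sum>j\<in>D. f j) choose (\<Sum>j\<in>D. g j))"
    using insert by simp
  also have "\<dots> \<le> (f a + (\<Sum>j\<in>D. f j)) choose (g a + (\<Sum>j\<in>D. g j))"
    by (rule choose_mult_le_choose_add)
  finally show ?case using insert by simp
qed simp

lemma choose_div_choose_le_power:
  assumes "m \<le> n" "0 < n"
  shows "real (m choose j) / real (n choose j) \<le> (real m / real n) ^ j"
proof (cases "j \<le> m")
  case False
  then show ?thesis by (simp add: binomial_eq_0)
next
  case True
  with assms have jn: "j \<le> n" by simp
  have "real (m choose j) / real (n choose j) =
        (\<Prod>i<j. real (m - i) / real (j - i)) / (\<Prod>i<j. real (n - i) / real (j - i))"
    using binomial_altdef_of_nat[OF True, where 'a=real] binomial_altdef_of_nat[OF jn, where 'a=real]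
    by (simp add: atLeast0LessThan)
  also have "\<dots> = (\<Prod>i<j. real (m - i) / real (n - i))"
    by (simp flip: prod_dividef)
  also have "\<dots> \<le> (\<Prod>i<j. real m / real n)"
  proof (rule prod_mono)
    fix i assume "i \<in> {..<j}"
    with True jn have i: "i < m" "i < n" by auto
    then have "real (m - i) * real n \<le> real m * real (n - i)"
      using assms by (simp add: of_nat_diff algebra_simps mult_left_mono)
    with i show "0 \<le> real (m - i) / real (n - i) \<and> real (m - i) / real (n - i) \<le> real m / real n"
      using assms by (simp add: divide_simps)
  qed
  finally show ?thesis by simp
qed

lemma degree_factor_le:
  assumes "t \<le> k" "k \<le> a" "2 \<le> j" "m \<le> n" "0 < n"
  shows "real ((a - t) choose (k - t)) * (real (m choose j) / real (n choose j)) ^ (a - k)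
         \<le> real (a choose (a - k)) * ((real m / real n) ^ 2) ^ (a - k)"
proof (rule mult_mono)
  have "(a - t) choose (k - t) = (a - t) choose (a - k)"
    using assms binomial_symmetric[of "k - t" "a - t"] by simp
  also have "\<dots> \<le> a choose (a - k)"
    by (rule binomial_right_mono) simp
  finally show "real ((a - t) choose (k - t)) \<le> real (a choose (a - k))"
    by simp
  have "real (m choose j) / real (n choose j) \<le> (real m / real n) ^ j"
    using assms by (intro choose_div_choose_le_power)
  also have "\<dots> \<le> (real m / real n) ^ 2"
    using assms by (intro power_decreasing) auto
  finally show "(real (m choose j) / real (n choose j)) ^ (a - k) \<le> ((real m / real n) ^ 2) ^ (a - k)"
    by (rule power_mono) simp
qed simp_all

lemma Suc_power_le_exp_mult_power: "real (Suc i) ^ i \<le> exp 1 * real i ^ i"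
proof (cases "i = 0")
  case False
  have "(1 + 1 / real i) ^ i \<le> exp (1 / real i) ^ i"
    by (rule power_mono[OF exp_ge_add_one_self]) simp
  also have "\<dots> = exp 1"
    using False by (simp flip: exp_of_nat_mult)
  finally have "(real (Suc i) / real i) ^ i \<le> exp 1"
    using False by (simp add: field_simps)
  then show ?thesis
    using False by (simp add: power_divide divide_simps)
qed (simp add: one_le_exp_iff)

definition decay_term :: "real \<Rightarrow> nat \<Rightarrow> real" where
  "decay_term N m = real m ^ (2 * m) / (fact m * N ^ m)"

lemma choose_mult_square_ratio_le_decay_term:
  assumes "0 < n"
  shows "real (n choose m) * ((real m / real n) ^ 2) ^ m \<le> decay_term (real n) m"
proof -
  have "real (n choose m) * fact m \<le> real n ^ m"
    by (metis binomial_fact_pow of_nat_fact of_nat_le_iff of_nat_mult of_nat_power)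
  then have "real (n choose m) \<le> real n ^ m / fact m"
    by (simp add: field_simps)
  then have "real (n choose m) * ((real m / real n) ^ 2) ^ m \<le> real n ^ m / fact m * ((real m / real n) ^ 2) ^ m"
    by (rule mult_right_mono) simp
  also have "\<dots> = decay_term (real n) m"
    unfolding decay_term_def using assms
    by (simp add: power_divide power_mult[symmetric] field_simps mult.commute power_add[symmetric] flip: mult_2)
  finally show ?thesis .
qed

lemma decay_term_Suc_le:
  assumes "real (Suc i) * exp 2 \<le> N"
  shows "decay_term N (Suc i) \<le> decay_term N i"
proof -
  have N: "0 < N"
    using assms by (smt (verit) exp_gt_zero mult_pos_pos of_nat_0_less_iff zero_less_Suc)
  have "real (Suc i) ^ (2 * i) = (real (Suc i) ^ i) ^ 2"
    by (simp add: power_mult mult.commute)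
  also have "\<dots> \<le> (exp 1 * real i ^ i) ^ 2"
    by (rule power_mono[OF Suc_power_le_exp_mult_power]) simp
  also have "\<dots> = exp 2 * real i ^ (2 * i)"
    by (simp add: power_mult_distrib power_mult mult.commute flip: exp_of_nat_mult)
  finally have "real (Suc i) * real (Suc i) ^ (2 * i) \<le> real (Suc i) * (exp 2 * real i ^ (2 * i))"
    by (rule mult_left_mono) simp
  also have "\<dots> \<le> N * real i ^ (2 * i)"
    using mult_right_mono[OF assms, of "real i ^ (2 * i)"] by (simp add: mult.assoc)
  finally have num: "real (Suc i) ^ (2 * i + 1) \<le> N * real i ^ (2 * i)"
    by simp
  have "decay_term N (Suc i) = real (Suc i) ^ (2 * i + 1) / (fact i * N ^ Suc i)"
    unfolding decay_term_def by (simp add: fact_Suc power_add field_simps del: of_nat_Suc)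
  also have "\<dots> \<le> N * real i ^ (2 * i) / (fact i * N ^ Suc i)"
    by (rule divide_right_mono[OF num]) (use N in simp)
  also have "\<dots> = decay_term N i"
    unfolding decay_term_def using N by (simp add: field_simps)
  finally show ?thesis .
qed

lemma decay_term_antimono:
  assumes "m0 \<le> m" "real m * exp 2 \<le> N"
  shows "decay_term N m \<le> decay_term N m0"
  using assms
proof (induction m rule: dec_induct)
  case (step i)
  then have "real (Suc i) * exp 2 \<le> N" "real i * exp 2 \<le> N"
    by (auto intro: order_trans[OF mult_right_mono[of "real i" "real (Suc i)"]])
  then show ?case
    using step.IH decay_term_Suc_le order_trans by blast
qed simp

lemma decay_term_le_power_div:
  assumes "0 < N"
  shows "decay_term N m \<le> real m ^ (2 * m) / N ^ m"
  unfolding decay_term_def using assms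
  by (intro divide_left_mono) (auto simp: fact_ge_1 intro!: mult_pos_pos)

lemma div_power_less_powr:
  fixes c N :: real
  assumes "c < N" and N: "0 < N"
  shows "c / N ^ (x + 3) < N powr - (2 + real x)"
proof -
  have "c / N ^ (x + 3) < N / N ^ (x + 3)"
    using assms N by (simp add: divide_strict_right_mono)
  also have "\<dots> = inverse (N ^ (x + 2))"
    using N by (simp add: field_simps power_add numeral_3_eq_3)
  also have "\<dots> = inverse (N powr real (x + 2))"
    by (simp only: powr_realpow[OF N])
  also have "\<dots> = N powr - (2 + real x)"
    using powr_minus[of N "2 + real x"] by (simp add: add.commute)
  finally show ?thesis .
qed

lemma power_mult_div_power_le:
  fixes c N :: real
  assumes "2 ^ D * c \<le> N" "x \<le> D" "1 \<le> N" "0 \<le> c"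
  shows "(N + 1) ^ x * (c / N ^ (x + 3)) \<le> 1 / N\<^sup>2"
proof -
  have "(N + 1) ^ x \<le> 2 ^ D * N ^ x"
  proof -
    have "(N + 1) ^ x \<le> (2 * N) ^ x"
      using assms by (intro power_mono) auto
    also have "\<dots> \<le> 2 ^ D * N ^ x"
      using assms by (simp add: power_mult_distrib power_increasing)
    finally show ?thesis .
  qed
  then have "(N + 1) ^ x * (c / N ^ (x + 3)) \<le> 2 ^ D * N ^ x * (c / N ^ (x + 3))"
    using assms by (intro mult_right_mono) auto
  also have "\<dots> = 2 ^ D * c / N ^ 3"
    using assms by (simp add: field_simps power_add)
  also have "\<dots> \<le> N / N ^ 3"
    using assms by (intro divide_right_mono) auto
  also have "\<dots> = 1 / N\<^sup>2"
    using assms by (simp add: field_simps numeral_3_eq_3 power2_eq_square)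
  finally show ?thesis .
qed

lemma card_add_one_le_Max:
  fixes D :: "nat set"
  assumes "finite D" "D \<noteq> {}" "\<forall>j\<in>D. 2 \<le> j"
  shows "card D + 1 \<le> Max D"
proof -
  have "D \<subseteq> {2..Max D}"
    using assms by auto
  then have "card D \<le> Max D - 1"
    using card_mono[of "{2..Max D}" D] by simp
  moreover have "2 \<le> Max D"
    using assms Max_in by blast
  ultimately show ?thesis by simp
qed

lemma R_tuple_nonneg_le_1:
  assumes "finite V"
  shows "0 \<le> R_tuple V d B kk \<and> R_tuple V d B kk \<le> 1"
proof -
  have "finite (outcomes V d)"
    unfolding outcomes_def using assms by (intro finite_PiE) (auto intro: finite_subset[of _ "Pow V"])
  then show ?thesis
    unfolding R_tuple_def R_set_def
    using card_mono[of "outcomes V d" "{Nb \<in> outcomes V d. all_reach Nb B _}"]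
    by (auto simp: divide_le_eq_1)
qed

lemma sum_cnt_eq_card: "finite V \<Longrightarrow> (\<Sum>j\<in>d ` V. cnt d V j) = card V"
  unfolding cnt_def using sum.group[of V "d ` V" d "\<lambda>_. 1::nat"] by simp

lemma card_degrees_le_Max:
  assumes "finite V" "V \<noteq> {}" "\<forall>v\<in>V. 2 \<le> d v \<and> d v \<le> Dc"
  shows "card (d ` V) + 1 \<le> Max (d ` V)" "Max (d ` V) \<le> Dc"
  using assms card_add_one_le_Max[of "d ` V"] Max_in[of "d ` V"] by auto

lemma a_tuple_le_choose_mult:
  assumes V: "finite V" and deg: "\<forall>v\<in>V. 2 \<le> d v"
    and kk: "\<forall>j\<in>d ` V. cnt d B j \<le> kk j \<and> kk j \<le> cnt d V j"
    and sum_kk: "(\<Sum>j\<in>d ` V. kk j) = k" and n: "0 < card V"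
  shows "a_tuple V d B kk \<le>
    real (card V choose (card V - k)) * ((real (card V - k) / real (card V)) ^ 2) ^ (card V - k)"
proof -
  define n where "n = card V"
  define m where "m = card V - k"
  define D where "D = d ` V"
  define q where "q = (real m / real n) ^ 2"
  define P where "P = (\<Prod>j\<in>D. real ((cnt d V j - cnt d B j) choose (kk j - cnt d B j))
          * (real (m choose j) / real (n choose j)) ^ (cnt d V j - kk j))"
  have sum_a: "(\<Sum>j\<in>D. cnt d V j) = n"
    using sum_cnt_eq_card[OF V] by (simp add: n_def D_def)
  have "(\<Sum>j\<in>D. cnt d V j - kk j) = (\<Sum>j\<in>D. cnt d V j) - (\<Sum>j\<in>D. kk j)"
    using kk by (intro sum_subtractf_nat) (auto simp: D_def)
  then have sum_diff: "(\<Sum>j\<in>D. cnt d V j - kk j) = m"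
    using sum_a sum_kk by (simp add: m_def n_def D_def)
  have "P \<le> (\<Prod>j\<in>D. real (cnt d V j choose (cnt d V j - kk j)) * q ^ (cnt d V j - kk j))"
    unfolding P_def q_def
    using deg kk n by (intro prod_mono conjI degree_factor_le) (auto simp: D_def m_def n_def)
  also have "\<dots> = real (\<Prod>j\<in>D. cnt d V j choose (cnt d V j - kk j)) * q ^ m"
    by (simp add: prod.distrib power_sum sum_diff[symmetric])
  also have "\<dots> \<le> real (n choose m) * q ^ m"
    using prod_choose_le_choose_sum[of D "cnt d V" "\<lambda>j. cnt d V j - kk j"] V sum_a sum_diff
    by (intro mult_right_mono) (simp_all add: q_def D_def del: of_nat_prod)
  finally have "P \<le> real (n choose m) * q ^ m" .
  moreover have "a_tuple V d B kk = P * R_tuple V d B kk"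
    unfolding a_tuple_def Let_def P_def m_def n_def D_def sum_kk by simp
  moreover have "0 \<le> P"
    unfolding P_def by (rule prod_nonneg) simp
  ultimately show ?thesis
    using R_tuple_nonneg_le_1[OF V, of d B kk] mult_left_mono[of "R_tuple V d B kk" 1 P]
    by (simp add: q_def m_def n_def)
qed

lemma a_tuple_le_const_div_power:
  assumes V: "finite V" and deg: "\<forall>v\<in>V. 2 \<le> d v \<and> d v \<le> Dc"
    and Max_lt: "Max (d ` V) + 1 < card V - k"
    and sparse: "real (card V - k) \<le> real (card V) / exp 2"
    and kk: "\<forall>j\<in>d ` V. cnt d B j \<le> kk j \<and> kk j \<le> cnt d V j"
    and sum_kk: "(\<Sum>j\<in>d ` V. kk j) = k"
  shows "a_tuple V d B kk \<le> real (Dc + 3) ^ (2 * (Dc + 3)) / real (card V) ^ (card (d ` V) + 3)"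
proof -
  define n where "n = card V"
  define m where "m = card V - k"
  define x where "x = card (d ` V)"
  have n: "0 < n"
    using Max_lt by (simp add: n_def)
  then have "V \<noteq> {}"
    by (auto simp: n_def)
  then have x_Max: "x + 1 \<le> Max (d ` V)" and Max_Dc: "Max (d ` V) \<le> Dc"
    using card_degrees_le_Max[OF V _ deg] by (auto simp: x_def)
  have "a_tuple V d B kk \<le> real (n choose m) * ((real m / real n) ^ 2) ^ m"
    using a_tuple_le_choose_mult[OF V _ kk sum_kk] deg n by (simp add: n_def m_def)
  also have "\<dots> \<le> decay_term (real n) m"
    using n by (rule choose_mult_square_ratio_le_decay_term)
  also have "\<dots> \<le> decay_term (real n) (x + 3)"
    using x_Max Max_lt sparse by (intro decay_term_antimono) (auto simp: m_def n_def field_simps)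
  also have "\<dots> \<le> real (x + 3) ^ (2 * (x + 3)) / real n ^ (x + 3)"
    using n by (intro decay_term_le_power_div) simp
  also have "\<dots> \<le> real (Dc + 3) ^ (2 * (Dc + 3)) / real n ^ (x + 3)"
  proof (rule divide_right_mono)
    have "real (x + 3) ^ (2 * (x + 3)) \<le> real (Dc + 3) ^ (2 * (x + 3))"
      using x_Max Max_Dc by (intro power_mono) auto
    also have "\<dots> \<le> real (Dc + 3) ^ (2 * (Dc + 3))"
      using x_Max Max_Dc by (intro power_increasing) auto
    finally show "real (x + 3) ^ (2 * (x + 3)) \<le> real (Dc + 3) ^ (2 * (Dc + 3))" .
  qed simp
  finally show ?thesis
    by (simp add: n_def x_def)
qed

lemma a_tuple_less_powr:
  assumes V: "finite V" and deg: "\<forall>v\<in>V. 2 \<le> d v \<and> d v \<le> Dc"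
    and Max_lt: "Max (d ` V) + 1 < card V - k"
    and sparse: "real (card V - k) \<le> real (card V) / exp 2"
    and kk: "\<forall>j\<in>d ` V. cnt d B j \<le> kk j \<and> kk j \<le> cnt d V j"
    and sum_kk: "(\<Sum>j\<in>d ` V. kk j) = k"
    and big: "(Dc + 3) ^ (2 * (Dc + 3)) < card V"
  shows "a_tuple V d B kk < real (card V) powr - (2 + real (card (d ` V)))"
proof -
  have "real ((Dc + 3) ^ (2 * (Dc + 3))) < real (card V)"
    using big by (simp only: of_nat_less_iff)
  moreover have "0 < real (card V)"
    using Max_lt by simp
  ultimately show ?thesis
    by (intro le_less_trans[OF a_tuple_le_const_div_power[OF V deg Max_lt sparse kk sum_kk]]
        div_power_less_powr) simp_all
qed

lemma card_tuples_le:
  assumes "finite V"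
  shows "card (tuples V d B k) \<le> (card V + 1) ^ card (d ` V)"
proof -
  have "card (tuples V d B k) \<le> card (PiE (d ` V) (\<lambda>j. {cnt d B j..cnt d V j}))"
    using assms by (intro card_mono) (auto simp: tuples_def intro!: finite_PiE)
  also have "\<dots> = (\<Prod>j\<in>d ` V. card {cnt d B j..cnt d V j})"
    using assms by (simp add: card_PiE)
  also have "\<dots> \<le> (\<Prod>j\<in>d ` V. card V + 1)"
  proof (rule prod_mono)
    fix j
    have "cnt d V j \<le> card V"
      unfolding cnt_def using assms by (intro card_mono) auto
    then show "0 \<le> card {cnt d B j..cnt d V j} \<and> card {cnt d B j..cnt d V j} \<le> card V + 1"
      by simp
  qed
  finally show ?thesis by simp
qed

lemma alpha_le_card_power_mult:
  assumes "finite V" "0 \<le> c" "\<And>kk. kk \<in> tuples V d B k \<Longrightarrow> a_tuple V d B kk \<le> c"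
  shows "alpha V d B k \<le> (real (card V) + 1) ^ card (d ` V) * c"
proof -
  have "alpha V d B k \<le> real (card (tuples V d B k)) * c"
    unfolding alpha_def using assms(3) by (rule sum_bounded_above)
  also have "\<dots> \<le> (real (card V) + 1) ^ card (d ` V) * c"
  proof (rule mult_right_mono)
    have "real (card (tuples V d B k)) \<le> real ((card V + 1) ^ card (d ` V))"
      using card_tuples_le[OF assms(1)] by (simp only: of_nat_le_iff)
    then show "real (card (tuples V d B k)) \<le> (real (card V) + 1) ^ card (d ` V)"
      by (simp add: add.commute)
  qed (rule assms(2))
  finally show ?thesis .
qed

lemma alpha_le_inverse_square:
  assumes V: "finite V" and deg: "\<forall>v\<in>V. 2 \<le> d v \<and> d v \<le> Dc"
    and Max_lt: "Max (d ` V) + 1 < card V - k"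
    and sparse: "real (card V - k) \<le> real (card V) / exp 2"
    and big: "2 ^ Dc * (Dc + 3) ^ (2 * (Dc + 3)) \<le> card V"
  shows "alpha V d B k \<le> 1 / (real (card V))\<^sup>2"
proof -
  define n where "n = real (card V)"
  define x where "x = card (d ` V)"
  define c where "c = real (Dc + 3) ^ (2 * (Dc + 3))"
  have "real (2 ^ Dc * (Dc + 3) ^ (2 * (Dc + 3))) \<le> real (card V)"
    using big by (simp only: of_nat_le_iff)
  then have big: "2 ^ Dc * c \<le> n"
    by (simp add: n_def c_def)
  have c: "1 \<le> c"
    by (simp add: c_def)
  have "V \<noteq> {}"
    using Max_lt by auto
  then have "x \<le> Dc"
    using card_degrees_le_Max[OF V _ deg] by (simp add: x_def)
  have "alpha V d B k \<le> (real (card V) + 1) ^ card (d ` V) * (c / n ^ (x + 3))"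
  proof (rule alpha_le_card_power_mult[OF V])
    show "0 \<le> c / n ^ (x + 3)"
      using c by (simp add: n_def)
    fix kk assume "kk \<in> tuples V d B k"
    then show "a_tuple V d B kk \<le> c / n ^ (x + 3)"
      using a_tuple_le_const_div_power[OF V deg Max_lt sparse]
      by (auto simp: tuples_def PiE_def Pi_def c_def n_def x_def)
  qed
  also have "\<dots> \<le> 1 / n\<^sup>2"
    using power_mult_div_power_le[OF big \<open>x \<le> Dc\<close>] big c order_trans[of 1 c "2 ^ Dc * c"]
    by (simp add: n_def x_def)
  finally show ?thesis
    by (simp add: n_def)
qed

theorem lemma16:
  fixes Dc :: nat
  shows "\<exists>N::nat. \<forall>(V::'a set) B (d::'a \<Rightarrow> nat) k.
    finite V \<and> card V \<ge> N \<and> B \<subseteq> V \<and> (\<forall>v\<in>V. 2 \<le> d v \<and> d v \<le> Dc) \<and>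
    k \<ge> card B \<and> Max (d ` V) + 1 < card V - k \<and> real (card V - k) \<le> real (card V) / exp 2
    \<longrightarrow> (\<forall>kk. (\<forall>j\<in>d ` V. cnt d B j \<le> kk j \<and> kk j \<le> cnt d V j) \<and> (\<Sum>j\<in>d ` V. kk j) = k
             \<longrightarrow> a_tuple V d B kk < real (card V) powr (- (2 + real (card (d ` V)))))
      \<and> alpha V d B k \<le> 1 / (real (card V))\<^sup>2"
proof (intro exI[of _ "2 ^ Dc * (Dc + 3) ^ (2 * (Dc + 3)) + 1"] allI impI)
  fix V :: "'a set" and B and d :: "'a \<Rightarrow> nat" and k
  assume "finite V \<and> card V \<ge> 2 ^ Dc * (Dc + 3) ^ (2 * (Dc + 3)) + 1 \<and> B \<subseteq> V \<and>
    (\<forall>v\<in>V. 2 \<le> d v \<and> d v \<le> Dc) \<and> k \<ge> card B \<and> Max (d ` V) + 1 < card V - k \<and>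
    real (card V - k) \<le> real (card V) / exp 2"
  then have V: "finite V" and deg: "\<forall>v\<in>V. 2 \<le> d v \<and> d v \<le> Dc"
    and big: "2 ^ Dc * (Dc + 3) ^ (2 * (Dc + 3)) < card V"
    and Max_lt: "Max (d ` V) + 1 < card V - k"
    and sparse: "real (card V - k) \<le> real (card V) / exp 2"
    by auto
  have "(Dc + 3) ^ (2 * (Dc + 3)) < card V"
    using big le_less_trans[OF mult_le_mono1[of 1 "2 ^ Dc"]] by simp
  then show "(\<forall>kk. (\<forall>j\<in>d ` V. cnt d B j \<le> kk j \<and> kk j \<le> cnt d V j) \<and> (\<Sum>j\<in>d ` V. kk j) = k
             \<longrightarrow> a_tuple V d B kk < real (card V) powr (- (2 + real (card (d ` V)))))
      \<and> alpha V d B k \<le> 1 / (real (card V))\<^sup>2"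
    using a_tuple_less_powr[OF V deg Max_lt sparse] alpha_le_inverse_square[OF V deg Max_lt sparse] big
    by simp
qed

end
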